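(* Let $G=(V,E)$ be a finite connected simple graph with adjacency matrix $A$, let $W\subseteq V$ be a nonempty set of marked vertices, let $\gamma>0$, and let $H=-\gamma A-\sum_{w\in W}|w\rangle\langle w|$ on $\mathcal{H}=\mathbb{C}^V$. Let $\phi_0$ be the largest eigenvalue of $A$ and $|\phi_0\rangle$ a normalized eigenvector of $A$ for $\phi_0$. Let $\lambda^-$ be the smallest eigenvalue of $H$ and $|\lambda^-\rangle$ an associated eigenvector. Then $\lambda^-$ is a simple eigenvalue of $H$, $\langle\lambda^-|\phi_0\rangle\neq0$, and $\lambda^-<-\gamma\phi_0$.
   Context: $\{|v\rangle: v\in V\}$ is the computational basis of $\mathcal{H}$. Since $G$ is connected, $\phi_0$ is a simple eigenvalue of $A$. *)

theory Defs
  imports "HOL-Analysis.Analysis"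
begin

text \<open>Vertices of the graph are the elements of a finite type 'n; the Hilbert space is complex^'n,
  with computational basis vectors ket v = axis v 1.\<close>

definition simple_graph :: "('n \<Rightarrow> 'n \<Rightarrow> bool) \<Rightarrow> bool" where
  "simple_graph E \<longleftrightarrow> (\<forall>x y. E x y \<longrightarrow> E y x) \<and> (\<forall>x. \<not> E x x)"

definition connected_graph :: "('n \<Rightarrow> 'n \<Rightarrow> bool) \<Rightarrow> bool" where
  "connected_graph E \<longleftrightarrow> (\<forall>x y. E\<^sup>*\<^sup>* x y)"

definition adjacency_matrix :: "('n::finite \<Rightarrow> 'n \<Rightarrow> bool) \<Rightarrow> complex^'n^'n" where
  "adjacency_matrix E = (\<chi> i j. if E i j then 1 else 0)"

definition ket :: "'n::finite \<Rightarrow> complex^'n" where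
  "ket v = axis v 1"

definition braket :: "complex^'n::finite \<Rightarrow> complex^'n \<Rightarrow> complex" where
  "braket a b = (\<Sum>i\<in>UNIV. cnj (a $ i) * b $ i)"

definition outer :: "complex^'n::finite \<Rightarrow> complex^'n \<Rightarrow> complex^'n^'n" where
  "outer u v = (\<chi> i j. u $ i * cnj (v $ j))"

definition is_eigenvalue :: "complex^'n::finite^'n \<Rightarrow> complex \<Rightarrow> bool" where
  "is_eigenvalue M \<mu> \<longleftrightarrow> (\<exists>v. v \<noteq> 0 \<and> M *v v = \<mu> *s v)"

text \<open>A simple eigenvalue: its eigenspace is one-dimensional (for Hermitian matrices this is
  the same as algebraic multiplicity one).\<close>
definition simple_eigenvalue :: "complex^'n::finite^'n \<Rightarrow> complex \<Rightarrow> bool" where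
  "simple_eigenvalue M \<mu> \<longleftrightarrow> is_eigenvalue M \<mu> \<and>
     (\<forall>u v. u \<noteq> 0 \<longrightarrow> M *v u = \<mu> *s u \<longrightarrow> M *v v = \<mu> *s v \<longrightarrow> (\<exists>c. v = c *s u))"

end

theory Submission
  imports Defs
begin

(* Both A and -H = gam A + sum_w |w><w| are real symmetric matrices with nonnegative entries
   that are positive along the edges of the connected graph, and Perron-Frobenius applies to them:
   the top eigenvalue maximises the quadratic form on the unit sphere, replacing a top eigenvector
   x by its entrywise modulus |x| does not decrease the form, so |x| is again a top eigenvector,
   and the eigenvalue equation at a zero entry of |x| forces all neighbours to vanish.  Hence top
   eigenvectors have no zero entries, the top eigenspace is a line, and it is spanned by a positive
   vector.  For -H this gives simplicity of lam; as v and p are both phases times positive vectors,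
   <v|p> is nonzero; and the Rayleigh bound for -H at p gives
   -lam >= gam phi0 + sum_{w in W} |p_w|^2 > gam phi0. *)

lemma braket_commute: "braket x y = cnj (braket y x)"
  by (simp add: braket_def mult.commute)

lemma inner_eq_Re_braket: "inner x y = Re (braket x y)"
  by (simp add: inner_vec_def braket_def inner_complex_def)

lemma braket_smult: "braket (c *s x) (d *s y) = cnj c * d * braket x y"
  by (simp add: braket_def sum_distrib_left mult_ac)

lemma of_real_smult_eq_scaleR: "complex_of_real c *s (x::complex^'n) = c *\<^sub>R x"
  by (simp add: vec_eq_iff) (metis scaleR_conv_of_real)

lemma matrix_vector_mult_scaleR_complex:
  "(M::complex^'n::finite^'m) *v (t *\<^sub>R x) = t *\<^sub>R (M *v x)"
  by (rule linear_cmul[OF matrix_vector_mul_linear])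

lemma scaleR_matrix_vector_mult_complex:
  "(t *\<^sub>R (M::complex^'n::finite^'m)) *v x = t *\<^sub>R (M *v x)"
  by (simp add: vec_eq_iff matrix_vector_mult_def scaleR_sum_right)

lemma nonpos_if_linear_plus_quadratic_nonpos:
  fixes a b :: real
  assumes "\<And>t. t > 0 \<Longrightarrow> t * a + t\<^sup>2 * b \<le> 0"
  shows "a \<le> 0"
proof (rule ccontr)
  assume "\<not> a \<le> 0"
  define t where "t = a / (\<bar>b\<bar> + 1)"
  have "t > 0" "t * \<bar>b\<bar> < a"
    using \<open>\<not> a \<le> 0\<close> by (auto simp: t_def field_simps)
  then have "t * (a - t * \<bar>b\<bar>) > 0"
    by simp
  moreover have "t\<^sup>2 * b \<ge> t\<^sup>2 * - \<bar>b\<bar>"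
    by (intro mult_left_mono) auto
  then have "t * a + t\<^sup>2 * b \<ge> t * (a - t * \<bar>b\<bar>)"
    by (simp add: power2_eq_square algebra_simps)
  ultimately show False
    using assms[OF \<open>t > 0\<close>] by linarith
qed

locale hermitian_matrix =
  fixes M :: "complex^'n::finite^'n"
  assumes cnj_entry: "cnj (M $ i $ j) = M $ j $ i"
begin

lemma braket_mult_right: "braket x (M *v y) = braket (M *v x) y"
proof -
  have "braket x (M *v y) = (\<Sum>i\<in>UNIV. \<Sum>j\<in>UNIV. cnj (x $ i) * M $ i $ j * y $ j)"
    by (simp add: braket_def matrix_vector_mult_def sum_distrib_left mult.assoc)
  also have "\<dots> = (\<Sum>j\<in>UNIV. \<Sum>i\<in>UNIV. cnj (x $ i) * M $ i $ j * y $ j)"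
    by (rule sum.swap)
  also have "\<dots> = braket (M *v x) y"
    by (simp add: braket_def matrix_vector_mult_def sum_distrib_left sum_distrib_right cnj_entry mult_ac)
  finally show ?thesis .
qed

lemma inner_mult_commute: "inner x (M *v y) = inner y (M *v x)"
  using braket_mult_right[of x y] braket_commute[of "M *v x" y]
  by (simp add: inner_eq_Re_braket)

(* Moving from the maximiser x along y = Mx - cx raises the form by 2t|y|^2 + O(t^2). *)
lemma eigenvector_if_quadratic_form_maximal:
  assumes le: "\<And>z. inner z (M *v z) \<le> c * (norm z)\<^sup>2"
    and eq: "inner x (M *v x) = c * (norm x)\<^sup>2"
  shows "M *v x = c *\<^sub>R x"
proof -
  define y where "y = M *v x - c *\<^sub>R x"
  have "t * (2 * (norm y)\<^sup>2) + t\<^sup>2 * (inner y (M *v y) - c * (norm y)\<^sup>2) \<le> 0" for t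
  proof -
    have quad: "inner (x + t *\<^sub>R y) (M *v (x + t *\<^sub>R y))
        = inner x (M *v x) + 2 * t * inner y (M *v x) + t\<^sup>2 * inner y (M *v y)"
      using inner_mult_commute[of x y]
      by (simp add: vec.add matrix_vector_mult_scaleR_complex power2_eq_square
          algebra_simps)
    have norm: "(norm (x + t *\<^sub>R y))\<^sup>2 = (norm x)\<^sup>2 + 2 * t * inner x y + t\<^sup>2 * (norm y)\<^sup>2"
      unfolding power2_norm_eq_inner
      by (simp add: inner_commute power2_eq_square algebra_simps)
    have cross: "inner y (M *v x) = (norm y)\<^sup>2 + c * inner x y"
      by (simp add: power2_norm_eq_inner y_def inner_commute algebra_simps)
    have "inner (x + t *\<^sub>R y) (M *v (x + t *\<^sub>R y)) - c * (norm (x + t *\<^sub>R y))\<^sup>2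
        = t * (2 * (norm y)\<^sup>2) + t\<^sup>2 * (inner y (M *v y) - c * (norm y)\<^sup>2)"
      unfolding quad norm cross eq by (simp add: algebra_simps)
    with le[of "x + t *\<^sub>R y"] show ?thesis
      by linarith
  qed
  then have "2 * (norm y)\<^sup>2 \<le> 0"
    by (rule nonpos_if_linear_plus_quadratic_nonpos)
  then show ?thesis
    by (simp add: y_def)
qed

lemma quadratic_form_le_top_eigenvalue:
  assumes top: "\<And>m. is_eigenvalue M m \<Longrightarrow> Re m \<le> mu"
  shows "inner z (M *v z) \<le> mu * (norm z)\<^sup>2"
proof -
  define q where "q z = inner z (M *v z)" for z
  have "sphere (0::complex^'n) 1 \<noteq> {}" "continuous_on (sphere 0 1) q"
    unfolding q_def by (simp, intro continuous_intros)
  then obtain x where x: "x \<in> sphere 0 1" and x_max: "\<And>w. w \<in> sphere 0 1 \<Longrightarrow> q w \<le> q x"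
    using continuous_attains_sup[OF compact_sphere] by blast
  have q_le: "q w \<le> q x * (norm w)\<^sup>2" for w
  proof (cases "w = 0")
    case False
    then have "q w = (norm w)\<^sup>2 * q (sgn w)"
      by (simp add: q_def sgn_div_norm matrix_vector_mult_scaleR_complex power2_eq_square field_simps)
    also have "\<dots> \<le> (norm w)\<^sup>2 * q x"
      using False by (intro mult_left_mono x_max) (auto simp: norm_sgn)
    finally show ?thesis
      by (simp add: mult.commute)
  qed (simp add: q_def)
  have "M *v x = q x *\<^sub>R x"
    using x by (intro eigenvector_if_quadratic_form_maximal) (auto simp: q_le[unfolded q_def] q_def)
  moreover have "x \<noteq> 0"
    using x by auto
  ultimately have "q x \<le> mu"
    using top[of "of_real (q x)"] by (auto simp: is_eigenvalue_def of_real_smult_eq_scaleR)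
  then have "q x * (norm z)\<^sup>2 \<le> mu * (norm z)\<^sup>2"
    by (simp add: mult_right_mono)
  with q_le[of z] show ?thesis
    by (simp add: q_def)
qed

end

definition cmod_vec :: "complex^'n \<Rightarrow> complex^'n" where
  "cmod_vec x = (\<chi> i. complex_of_real (cmod (x $ i)))"

lemma cmod_vec_nth [simp]: "cmod_vec x $ i = complex_of_real (cmod (x $ i))"
  by (simp add: cmod_vec_def)

lemma norm_cmod_vec [simp]: "norm (cmod_vec x) = norm x"
  by (simp add: norm_vec_def)

locale nonneg_irreducible_matrix = hermitian_matrix M for M :: "complex^'n::finite^'n" +
  fixes E :: "'n \<Rightarrow> 'n \<Rightarrow> bool"
  assumes entry_real: "Im (M $ i $ j) = 0"
    and entry_nonneg: "0 \<le> Re (M $ i $ j)"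
    and entry_pos_if_edge: "E i j \<Longrightarrow> 0 < Re (M $ i $ j)"
    and connected: "connected_graph E"
begin

lemma quadratic_form_le_cmod_vec: "inner x (M *v x) \<le> inner (cmod_vec x) (M *v cmod_vec x)"
proof -
  have "Re (cnj (x $ i) * M $ i $ j * x $ j) \<le> cmod (x $ i) * Re (M $ i $ j) * cmod (x $ j)" for i j
  proof -
    have "Re (cnj (x $ i) * M $ i $ j * x $ j) \<le> cmod (cnj (x $ i) * M $ i $ j * x $ j)"
      by (rule complex_Re_le_cmod)
    also have "\<dots> = cmod (x $ i) * Re (M $ i $ j) * cmod (x $ j)"
      using entry_real entry_nonneg by (simp add: norm_mult cmod_eq_Re)
    finally show ?thesis .
  qed
  then show ?thesis
    by (simp add: inner_eq_Re_braket braket_def matrix_vector_mult_def sum_distrib_left mult.assoc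
        sum_mono)
qed

context
  fixes mu :: real
  assumes top: "\<And>m. is_eigenvalue M m \<Longrightarrow> Re m \<le> mu"
begin

lemma cmod_vec_top_eigenvector:
  assumes "M *v x = complex_of_real mu *s x"
  shows "M *v cmod_vec x = complex_of_real mu *s cmod_vec x"
proof -
  have "mu * (norm x)\<^sup>2 = inner x (M *v x)"
    using assms by (simp add: of_real_smult_eq_scaleR power2_norm_eq_inner)
  also have "\<dots> \<le> inner (cmod_vec x) (M *v cmod_vec x)"
    by (rule quadratic_form_le_cmod_vec)
  finally have "inner (cmod_vec x) (M *v cmod_vec x) = mu * (norm (cmod_vec x))\<^sup>2"
    using quadratic_form_le_top_eigenvalue[OF top, of "cmod_vec x"] by simp
  then have "M *v cmod_vec x = mu *\<^sub>R cmod_vec x"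
    using eigenvector_if_quadratic_form_maximal quadratic_form_le_top_eigenvalue[OF top] by blast
  then show ?thesis
    by (simp add: of_real_smult_eq_scaleR)
qed

lemma top_eigenvector_nth_nonzero:
  assumes eig: "M *v x = complex_of_real mu *s x" and "x \<noteq> 0"
  shows "x $ k \<noteq> 0"
proof
  assume "x $ k = 0"
  have zero_step: "x $ j = 0" if "x $ i = 0" "E i j" for i j
  proof -
    have "(\<Sum>l\<in>UNIV. Re (M $ i $ l) * cmod (x $ l)) = Re ((M *v cmod_vec x) $ i)"
      by (simp add: matrix_vector_mult_def)
    also have "\<dots> = 0"
      using cmod_vec_top_eigenvector[OF eig] \<open>x $ i = 0\<close> by simp
    finally have "Re (M $ i $ j) * cmod (x $ j) = 0"
      using entry_nonneg by (subst (asm) sum_nonneg_eq_0_iff) auto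
    with entry_pos_if_edge[OF \<open>E i j\<close>] show ?thesis
      by simp
  qed
  have "x $ l = 0" for l
    using connected[unfolded connected_graph_def, rule_format, of k l]
    by (induction rule: rtranclp_induct) (use \<open>x $ k = 0\<close> zero_step in auto)
  with \<open>x \<noteq> 0\<close> show False
    by (simp add: vec_eq_iff)
qed

lemma top_eigenvector_unique:
  assumes u: "M *v u = complex_of_real mu *s u" "u \<noteq> 0"
    and v: "M *v v = complex_of_real mu *s v"
  shows "\<exists>c. v = c *s u"
proof -
  fix k :: 'n
  define w where "w = v - (v $ k / u $ k) *s u"
  have "u $ k \<noteq> 0"
    using top_eigenvector_nth_nonzero[OF u] .
  then have "w $ k = 0"
    by (simp add: w_def)
  moreover have "M *v w = complex_of_real mu *s w"
    by (simp add: w_def vec.diff vec.scale u v mult.commute)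
  ultimately have "w = 0"
    using top_eigenvector_nth_nonzero by blast
  then show ?thesis
    by (auto simp: w_def)
qed

lemma top_eigenvector_eq_phase_cmod_vec:
  assumes "M *v u = complex_of_real mu *s u"
  shows "\<exists>c. u = c *s cmod_vec u"
proof (cases "u = 0")
  case False
  then have "cmod_vec u \<noteq> 0"
    by (metis norm_cmod_vec norm_eq_zero)
  with top_eigenvector_unique cmod_vec_top_eigenvector[OF assms] assms show ?thesis
    by blast
qed simp

lemma simple_top_eigenvalue: "is_eigenvalue M mu \<Longrightarrow> simple_eigenvalue M mu"
  using top_eigenvector_unique by (simp add: simple_eigenvalue_def)

end

end

lemma matrix_vector_mult_uminus_left: "(- M :: 'a::ring_1^'n^'m) *v x = - (M *v x)"
  by (simp add: vec_eq_iff matrix_vector_mult_def sum_negf)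

lemma eigenvector_uminus_iff: "(- M :: 'a::ring_1^'n^'n) *v x = (- c) *s x \<longleftrightarrow> M *v x = c *s x"
  by (metis matrix_vector_mult_uminus_left vector_smult_lneg neg_equal_iff_equal)

lemma is_eigenvalue_uminus_iff: "is_eigenvalue (- M) (- c) \<longleftrightarrow> is_eigenvalue M c"
  unfolding is_eigenvalue_def eigenvector_uminus_iff ..

lemma simple_eigenvalue_uminus_iff: "simple_eigenvalue (- M) (- c) \<longleftrightarrow> simple_eigenvalue M c"
  unfolding simple_eigenvalue_def is_eigenvalue_uminus_iff eigenvector_uminus_iff ..

lemma braket_nonzero_if_phase_aligned:
  assumes "u = c *s cmod_vec u" "v = d *s cmod_vec v" "u $ k \<noteq> 0" "v $ k \<noteq> 0"
  shows "braket u v \<noteq> 0"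
proof -
  have "c \<noteq> 0" "d \<noteq> 0"
    using assms by (metis vector_smult_lzero zero_index)+
  moreover define S where "S = (\<Sum>i\<in>UNIV. cmod (u $ i) * cmod (v $ i))"
  have "S > 0"
    unfolding S_def using assms(3,4) by (intro sum_pos2[of _ k]) auto
  moreover have "braket u v = cnj c * d * complex_of_real S"
    unfolding S_def
    by (subst assms(1), subst assms(2)) (simp add: braket_smult braket_def sum_distrib_left mult_ac)
  ultimately show ?thesis
    by simp
qed

lemma adjacency_matrix_nth: "adjacency_matrix E $ i $ j = (if E i j then 1 else 0)"
  by (simp add: adjacency_matrix_def)

lemma sum_outer_ket_nth:
  "(\<Sum>w\<in>W. outer (ket w) (ket w)) $ i $ j = (if i = j \<and> i \<in> W then 1 else 0)"
proof -
  have "(\<Sum>w\<in>W. outer (ket w) (ket w)) $ i $ j = (\<Sum>w\<in>W. if i = w \<and> j = w then 1 else 0)"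
    by (simp add: outer_def ket_def axis_def) (intro sum.cong; auto)
  also have "\<dots> = (if i = j \<and> i \<in> W then 1 else 0)"
    by (cases "i = j") (auto intro!: sum.neutral)
  finally show ?thesis .
qed

lemma inner_sum_outer_ket:
  "inner x ((\<Sum>w\<in>W. outer (ket w) (ket w)) *v x) = (\<Sum>i\<in>W. (cmod (x $ i))\<^sup>2)"
proof -
  have P_x: "((\<Sum>w\<in>W. outer (ket w) (ket w)) *v x) $ i = (if i \<in> W then x $ i else 0)" for i
    unfolding matrix_vector_mult_def vec_lambda_beta sum_outer_ket_nth
    by (simp add: if_distrib[of "\<lambda>a. a * _"] cong: if_cong)
  show ?thesis
    by (simp add: inner_vec_def P_x if_distrib sum.If_cases dot_square_norm cong: if_cong)
qed

lemma nonneg_irreducible_adjacency_matrix: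
  assumes "simple_graph E" "connected_graph E"
  shows "nonneg_irreducible_matrix (adjacency_matrix E) E"
  using assms by unfold_locales (auto simp: adjacency_matrix_nth simple_graph_def)

lemma nonneg_irreducible_search_matrix:
  assumes "simple_graph E" "connected_graph E" "g > 0"
  shows "nonneg_irreducible_matrix (g *\<^sub>R adjacency_matrix E + (\<Sum>w\<in>W. outer (ket w) (ket w))) E"
proof -
  have "(g *\<^sub>R adjacency_matrix E + (\<Sum>w\<in>W. outer (ket w) (ket w))) $ i $ j
      = complex_of_real (g * (if E i j then 1 else 0) + (if i = j \<and> i \<in> W then 1 else 0))" for i j
    unfolding vector_add_component vector_scaleR_component adjacency_matrix_nth sum_outer_ket_nth
    by (auto simp: scaleR_conv_of_real)
  with assms show ?thesis
    by unfold_locales (auto simp: simple_graph_def)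
qed

lemma quadratic_form_search_matrix:
  assumes "adjacency_matrix E *v p = complex_of_real phi *s p" "norm p = 1"
  shows "inner p ((g *\<^sub>R adjacency_matrix E + (\<Sum>w\<in>W. outer (ket w) (ket w))) *v p)
    = g * phi + (\<Sum>i\<in>W. (cmod (p $ i))\<^sup>2)"
  using assms
  by (simp add: matrix_vector_mult_add_rdistrib scaleR_matrix_vector_mult_complex inner_add_right
      of_real_smult_eq_scaleR inner_sum_outer_ket dot_square_norm)

theorem proposition3:
  fixes E :: "'n::finite \<Rightarrow> 'n \<Rightarrow> bool"
    and W :: "'n set"
    and gam phi0 lam :: real
    and p v :: "complex^'n"
    and A H :: "complex^'n^'n"
  assumes graph: "simple_graph E" and conn: "connected_graph E"
    and A_def: "A = adjacency_matrix E"
    and W: "W \<noteq> {}"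
    and gam: "gam > 0"
    and H_def: "H = - (gam *\<^sub>R A) - (\<Sum>w\<in>W. outer (ket w) (ket w))"
    and phi0_eig: "is_eigenvalue A (complex_of_real phi0)"
    and phi0_max: "\<forall>\<mu>. is_eigenvalue A \<mu> \<longrightarrow> Re \<mu> \<le> phi0"
    and p_eig: "A *v p = complex_of_real phi0 *s p" and p_norm: "norm p = 1"
    and lam_eig: "is_eigenvalue H (complex_of_real lam)"
    and lam_min: "\<forall>\<mu>. is_eigenvalue H \<mu> \<longrightarrow> lam \<le> Re \<mu>"
    and v_eig: "v \<noteq> 0" "H *v v = complex_of_real lam *s v"
  shows "simple_eigenvalue H (complex_of_real lam) \<and> braket v p \<noteq> 0 \<and> lam < - gam * phi0"
proof -
  have neg_H_eq: "- H = gam *\<^sub>R A + (\<Sum>w\<in>W. outer (ket w) (ket w))"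
    by (simp add: H_def)
  interpret A: nonneg_irreducible_matrix A E
    using nonneg_irreducible_adjacency_matrix[OF graph conn] by (simp add: A_def)
  interpret neg_H: nonneg_irreducible_matrix "- H" E
    using nonneg_irreducible_search_matrix[OF graph conn gam] by (simp add: neg_H_eq A_def)
  have A_top: "\<And>m. is_eigenvalue A m \<Longrightarrow> Re m \<le> phi0"
    using phi0_max by blast
  have neg_H_top: "\<And>m. is_eigenvalue (- H) m \<Longrightarrow> Re m \<le> - lam"
    using lam_min is_eigenvalue_uminus_iff[of H "- _"] by fastforce
  have v_neg_H: "(- H) *v v = complex_of_real (- lam) *s v"
    using v_eig(2) eigenvector_uminus_iff[of H v "complex_of_real lam"] by simp
  have "p \<noteq> 0"
    using p_norm by auto
  have simple: "simple_eigenvalue H (complex_of_real lam)"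
    using neg_H.simple_top_eigenvalue[OF neg_H_top] lam_eig
    by (simp add: simple_eigenvalue_uminus_iff is_eigenvalue_uminus_iff)
  fix k :: 'n
  obtain c d where "v = c *s cmod_vec v" "p = d *s cmod_vec p"
    using neg_H.top_eigenvector_eq_phase_cmod_vec[OF neg_H_top v_neg_H]
      A.top_eigenvector_eq_phase_cmod_vec[OF A_top p_eig] by blast
  with neg_H.top_eigenvector_nth_nonzero[OF neg_H_top v_neg_H v_eig(1)]
    A.top_eigenvector_nth_nonzero[OF A_top p_eig \<open>p \<noteq> 0\<close>]
  have overlap: "braket v p \<noteq> 0"
    by (intro braket_nonzero_if_phase_aligned[of v c p d k])
  have "gam * phi0 + (\<Sum>i\<in>W. (cmod (p $ i))\<^sup>2) = inner p ((- H) *v p)"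
    using quadratic_form_search_matrix[of E p phi0 gam W] p_eig p_norm by (simp add: neg_H_eq A_def)
  also have "\<dots> \<le> - lam"
    using neg_H.quadratic_form_le_top_eigenvalue[OF neg_H_top, of p] p_norm by simp
  moreover have "(\<Sum>i\<in>W. (cmod (p $ i))\<^sup>2) > 0"
    using W A.top_eigenvector_nth_nonzero[OF A_top p_eig \<open>p \<noteq> 0\<close>] by (intro sum_pos) auto
  ultimately show ?thesis
    using simple overlap by simp
qed

end
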